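(* Let $X$ be a CAT(0) Euclidean polygonal complex and let $x,y,z\in X$. Then the geodesic triangle $\triangle(x,y,z)$ is (homeomorphic to) a spiky triangle.
   Context: A CAT(0) Euclidean polygonal complex is a 2-dimensional polygonal complex whose cells are convex Euclidean polygons, with its induced length metric, assumed CAT(0). $\overline{ab}$ denotes the unique geodesic between $a,b$; $\triangle(x,y,z)=\overline{xy}\cup\overline{yz}\cup\overline{zx}$. A spiky triangle is the topological space obtained by gluing a possibly degenerate interval at one endpoint to each of the three vertices of the boundary of a possibly degenerate Euclidean triangle. *)

theory Defs
  imports "HOL-Analysis.Analysis"
begin

definition geodesic_path :: "'a::metric_space set \<Rightarrow> (real \<Rightarrow> 'a) \<Rightarrow> 'a \<Rightarrow> 'a \<Rightarrow> bool" where
  "geodesic_path X \<gamma> a b \<longleftrightarrow>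
     \<gamma> 0 = a \<and> \<gamma> (dist a b) = b \<and> \<gamma> ` {0..dist a b} \<subseteq> X \<and>
     (\<forall>s\<in>{0..dist a b}. \<forall>t\<in>{0..dist a b}. dist (\<gamma> s) (\<gamma> t) = \<bar>s - t\<bar>)"

definition cmp_ineq :: "(real \<Rightarrow> 'a::metric_space) \<Rightarrow> real \<Rightarrow> real \<times> real \<Rightarrow> real \<times> real
     \<Rightarrow> (real \<Rightarrow> 'a) \<Rightarrow> real \<Rightarrow> real \<times> real \<Rightarrow> real \<times> real \<Rightarrow> bool" where
  "cmp_ineq \<gamma> L A B \<delta> M C D \<longleftrightarrow>
     (\<forall>s\<in>{0..1}. \<forall>t\<in>{0..1}.
        dist (\<gamma> (s * L)) (\<delta> (t * M)) \<le> dist (A + s *\<^sub>R (B - A)) (C + t *\<^sub>R (D - C)))"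

definition CAT0 :: "'a::metric_space set \<Rightarrow> bool" where
  "CAT0 X \<longleftrightarrow>
     (\<forall>x\<in>X. \<forall>y\<in>X. \<exists>\<gamma>. geodesic_path X \<gamma> x y) \<and>
     (\<forall>x\<in>X. \<forall>y\<in>X. \<forall>z\<in>X. \<forall>\<gamma>1 \<gamma>2 \<gamma>3.
        geodesic_path X \<gamma>1 x y \<and> geodesic_path X \<gamma>2 y z \<and> geodesic_path X \<gamma>3 z x \<longrightarrow>
        (\<forall>A B C :: real \<times> real.
           dist A B = dist x y \<and> dist B C = dist y z \<and> dist C A = dist z x \<longrightarrow>
           (let S = {(\<gamma>1, dist x y, A, B), (\<gamma>2, dist y z, B, C), (\<gamma>3, dist z x, C, A)} in
            \<forall>(\<gamma>, L, P, Q)\<in>S. \<forall>(\<delta>, M, R, T)\<in>S. cmp_ineq \<gamma> L P Q \<delta> M R T)))"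

text \<open>Lengths of m-strings (chains of points, consecutive ones lying in a common cell)
  from x to y, measured in the Euclidean metric of the cells.\<close>
definition string_lengths ::
  "'i set \<Rightarrow> ('i \<Rightarrow> (real \<times> real) set) \<Rightarrow> ('i \<Rightarrow> real \<times> real \<Rightarrow> 'a) \<Rightarrow> 'a \<Rightarrow> 'a \<Rightarrow> real set" where
  "string_lengths I P \<phi> x y =
     {(\<Sum>k<n. dist (u k) (w k)) | n pts c u w.
        pts 0 = x \<and> pts n = y \<and>
        (\<forall>k<n. c k \<in> I \<and> u k \<in> P (c k) \<and> w k \<in> P (c k) \<and>
               \<phi> (c k) (u k) = pts k \<and> \<phi> (c k) (w k) = pts (Suc k))}"

text \<open>X is a Euclidean polygonal complex (in the sense of Bridson--Haefliger, 2-dimensional):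
  X is obtained from a family of convex Euclidean polygons (convex polytopes in R^2),
  with characteristic maps phi i, glued by isometries of faces, and the metric of X is
  the induced (intrinsic, quotient length) metric.\<close>
definition euclidean_polygonal_complex ::
  "'a::metric_space set \<Rightarrow> 'i set \<Rightarrow> ('i \<Rightarrow> (real \<times> real) set) \<Rightarrow> ('i \<Rightarrow> real \<times> real \<Rightarrow> 'a) \<Rightarrow> bool" where
  "euclidean_polygonal_complex X I P \<phi> \<longleftrightarrow>
     (\<forall>i\<in>I. polytope (P i) \<and> P i \<noteq> {} \<and> inj_on (\<phi> i) (P i)) \<and>
     X = (\<Union>i\<in>I. \<phi> i ` P i) \<and>
     (\<forall>i\<in>I. \<forall>j\<in>I. \<forall>u\<in>P i. \<forall>v\<in>P j. \<phi> i u = \<phi> j v \<longrightarrow>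
        (\<exists>F F' h. F face_of P i \<and> F' face_of P j \<and> u \<in> F \<and>
           h ` F = F' \<and> (\<forall>a\<in>F. \<forall>b\<in>F. dist (h a) (h b) = dist a b) \<and>
           (\<forall>a\<in>F. \<phi> j (h a) = \<phi> i a))) \<and>
     (\<forall>x\<in>X. \<forall>y\<in>X. dist x y = Inf (string_lengths I P \<phi> x y))"

text \<open>Spiky triangle, realised in R^2 x R^3: the boundary of the (possibly degenerate)
  triangle a b c in the plane, with intervals of lengths la, lb, lc (possibly 0) glued at
  a, b, c, pointing in three independent extra directions.\<close>
definition spiky_triangle ::
  "real \<times> real \<Rightarrow> real \<times> real \<Rightarrow> real \<times> real \<Rightarrow> real \<Rightarrow> real \<Rightarrow> real
     \<Rightarrow> ((real \<times> real) \<times> (real \<times> real \<times> real)) set" where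
  "spiky_triangle a b c la lb lc =
     {(p, (0, 0, 0)) | p. p \<in> closed_segment a b \<union> closed_segment b c \<union> closed_segment c a} \<union>
     {(a, (s, 0, 0)) | s. 0 \<le> s \<and> s \<le> la} \<union>
     {(b, (0, s, 0)) | s. 0 \<le> s \<and> s \<le> lb} \<union>
     {(c, (0, 0, s)) | s. 0 \<le> s \<and> s \<le> lc}"

end

theory Submission
  imports Defs
begin

text \<open>In a CAT(0) space geodesics are unique, so two sides of a geodesic triangle that leave a
  common vertex agree up to some branch point and never meet again afterwards. Hence which
  parameters of the three sides give the same point is determined by the side lengths and the
  three branch lengths alone. The sides of a spiky triangle whose spikes have these lengths can be
  parametrised over the same intervals with exactly the same coincidences; matching parameters then
  gives a continuous bijection between compact Hausdorff spaces, i.e. a homeomorphism.\<close>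

section \<open>Geodesics in CAT(0) spaces\<close>

lemma geodesic_path_dist:
  assumes "geodesic_path X g a b" "s \<in> {0..dist a b}" "t \<in> {0..dist a b}"
  shows "dist (g s) (g t) = \<bar>s - t\<bar>"
  using assms unfolding geodesic_path_def by blast

lemma geodesic_path_ends:
  assumes "geodesic_path X g a b"
  shows "g 0 = a" "g (dist a b) = b"
  using assms unfolding geodesic_path_def by auto

lemma geodesic_path_ends_in:
  assumes "geodesic_path X g a b"
  shows "a \<in> X" "b \<in> X"
proof -
  have "g ` {0..dist a b} \<subseteq> X"
    using assms unfolding geodesic_path_def by blast
  then have "g 0 \<in> X" "g (dist a b) \<in> X"
    by auto
  then show "a \<in> X" "b \<in> X"
    using geodesic_path_ends[OF assms] by auto
qed

lemma geodesic_path_inj_on: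
  assumes "geodesic_path X g a b"
  shows "inj_on g {0..dist a b}"
  by (rule inj_onI) (use geodesic_path_dist[OF assms] in force)

lemma geodesic_path_continuous_on:
  assumes "geodesic_path X g a b"
  shows "continuous_on {0..dist a b} g"
proof -
  have "lipschitz_on 1 {0..dist a b} g"
    by (rule lipschitz_onI) (use geodesic_path_dist[OF assms] in \<open>auto simp: dist_real_def\<close>)
  then show ?thesis
    by (rule lipschitz_on_continuous_on)
qed

lemma geodesic_path_reverse:
  assumes "geodesic_path X g a b"
  shows "geodesic_path X (\<lambda>t. g (dist a b - t)) b a"
  using assms unfolding geodesic_path_def by (auto simp: dist_commute abs_minus_commute)

lemma geodesic_path_initial_segment:
  assumes "geodesic_path X g a b" "s \<in> {0..dist a b}"
  shows "dist a (g s) = s" "geodesic_path X g a (g s)"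
proof -
  show ds: "dist a (g s) = s"
    using geodesic_path_dist[OF assms(1), of 0 s] assms geodesic_path_ends[OF assms(1)] by auto
  show "geodesic_path X g a (g s)"
    using assms unfolding geodesic_path_def ds by auto
qed

lemma CAT0_comparison:
  assumes "CAT0 X" "geodesic_path X \<gamma>1 x y" "geodesic_path X \<gamma>2 y z" "geodesic_path X \<gamma>3 z x"
    and "dist A B = dist x y" "dist B C = dist y z" "dist C A = dist z x"
  shows "cmp_ineq \<gamma>1 (dist x y) A B \<gamma>3 (dist z x) C A"
proof -
  have "x \<in> X" "y \<in> X" "z \<in> X"
    using geodesic_path_ends_in assms(2,3) by metis+
  then have "let S = {(\<gamma>1, dist x y, A, B), (\<gamma>2, dist y z, B, C), (\<gamma>3, dist z x, C, A)} in
      \<forall>(\<gamma>, L, P, Q)\<in>S. \<forall>(\<delta>, M, R, T)\<in>S. cmp_ineq \<gamma> L P Q \<delta> M R T"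
    using assms unfolding CAT0_def by blast
  then show ?thesis
    unfolding Let_def by blast
qed

text \<open>Uniqueness follows from the comparison inequality for the degenerate triangle a b b.\<close>
lemma CAT0_geodesic_unique:
  assumes "CAT0 X" "geodesic_path X g a b" "geodesic_path X h a b" "u \<in> {0..dist a b}"
  shows "g u = h u"
proof (cases "dist a b = 0")
  case True
  then show ?thesis
    using assms(4) geodesic_path_ends[OF assms(2)] geodesic_path_ends[OF assms(3)] by simp
next
  case False
  define L where "L = dist a b"
  have "geodesic_path X (\<lambda>_. b) b b"
    using geodesic_path_ends_in[OF assms(2)] unfolding geodesic_path_def by auto
  then have "cmp_ineq g L (0, 0) (L, 0) (\<lambda>t. h (L - t)) L (L, 0) (0, 0)"
    using CAT0_comparison[OF assms(1,2) _ geodesic_path_reverse[OF assms(3)], of "\<lambda>_. b" "(0, 0)" "(L, 0)" "(L, 0)"]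
    by (simp add: L_def dist_commute dist_Pair_Pair)
  moreover have "u / L \<in> {0..1}" "1 - u / L \<in> {0..1}"
    using assms(4) False by (auto simp: L_def field_simps)
  ultimately have "dist (g (u / L * L)) (h (L - (1 - u / L) * L))
      \<le> dist ((0, 0) + (u / L) *\<^sub>R ((L, 0) - (0, 0))) ((L, 0) + (1 - u / L) *\<^sub>R ((0, 0) - (L, 0 :: real)))"
    unfolding cmp_ineq_def by blast
  also have "\<dots> = 0"
    using False by (simp add: L_def algebra_simps)
  finally show ?thesis
    using False by (simp add: L_def algebra_simps)
qed

lemma CAT0_geodesics_meet:
  assumes "CAT0 X" "geodesic_path X g a b" "geodesic_path X h a c"
    and "s \<in> {0..dist a b}" "t \<in> {0..dist a c}" "g s = h t"
  shows "s = t" "\<And>u. u \<in> {0..s} \<Longrightarrow> g u = h u"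
proof -
  have "dist a (g s) = s" "dist a (h t) = t"
    using geodesic_path_initial_segment assms by metis+
  then show "s = t"
    using assms(6) by simp
  show "g u = h u" if "u \<in> {0..s}" for u
    using CAT0_geodesic_unique[OF assms(1) geodesic_path_initial_segment(2)[OF assms(2,4)]]
      geodesic_path_initial_segment[OF assms(3,5)] assms(6) \<open>dist a (g s) = s\<close> that by auto
qed

text \<open>\<beta> is the largest common parameter; it exists because the set of common parameters is closed.\<close>
lemma CAT0_geodesics_branch_point:
  assumes "CAT0 X" "geodesic_path X g a b" "geodesic_path X h a c"
  obtains \<beta> where "0 \<le> \<beta>" "\<beta> \<le> dist a b" "\<beta> \<le> dist a c"
    "\<And>s t. s \<in> {0..dist a b} \<Longrightarrow> t \<in> {0..dist a c} \<Longrightarrow> g s = h t \<longleftrightarrow> s = t \<and> s \<le> \<beta>"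
proof -
  define I where "I = {0..min (dist a b) (dist a c)}"
  define S where "S = {t \<in> I. dist (g t) (h t) = 0}"
  have "continuous_on I g" "continuous_on I h"
    unfolding I_def using geodesic_path_continuous_on assms(2,3) continuous_on_subset
    by (metis atLeastatMost_subset_iff min.cobounded1 min.cobounded2 order_refl)+
  then have "closed S"
    unfolding S_def I_def by (intro continuous_closed_preimage_constant continuous_intros) auto
  moreover have "0 \<in> S" "bdd_above S"
    using geodesic_path_ends[OF assms(2)] geodesic_path_ends[OF assms(3)]
    by (auto simp: S_def I_def intro: bdd_aboveI[of _ "dist a b"])
  ultimately have "Sup S \<in> S"
    using closed_contains_Sup by blast
  show thesis
  proof (rule that[of "Sup S"])
    show "0 \<le> Sup S" "Sup S \<le> dist a b" "Sup S \<le> dist a c"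
      using \<open>Sup S \<in> S\<close> by (auto simp: S_def I_def)
    fix s t assume st: "s \<in> {0..dist a b}" "t \<in> {0..dist a c}"
    show "g s = h t \<longleftrightarrow> s = t \<and> s \<le> Sup S"
    proof
      assume "g s = h t"
      with st have "s = t"
        using CAT0_geodesics_meet(1) assms by metis
      with st \<open>g s = h t\<close> have "s \<in> S"
        by (auto simp: S_def I_def)
      with \<open>s = t\<close> \<open>bdd_above S\<close> show "s = t \<and> s \<le> Sup S"
        by (simp add: cSup_upper)
    next
      assume "s = t \<and> s \<le> Sup S"
      moreover have "g (Sup S) = h (Sup S)" "Sup S \<in> {0..dist a b}" "Sup S \<in> {0..dist a c}"
        using \<open>Sup S \<in> S\<close> by (auto simp: S_def I_def)
      ultimately show "g s = h t"
        using CAT0_geodesics_meet(2)[OF assms, of "Sup S" "Sup S" s] st by auto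
    qed
  qed
qed

section \<open>The coincidence pattern of a geodesic triangle\<close>

definition succ3 :: "nat \<Rightarrow> nat" where
  "succ3 i = Suc i mod 3"

lemma succ3_simps [simp]: "succ3 0 = 1" "succ3 1 = 2" "succ3 (Suc 0) = 2" "succ3 2 = 0" "succ3 i < 3"
  by (simp_all add: succ3_def)

lemma less_3_cases: "i < (3::nat) \<Longrightarrow> i = 0 \<or> i = 1 \<or> i = 2"
  by auto

lemma succ3_succ3_succ3 [simp]: "i < 3 \<Longrightarrow> succ3 (succ3 (succ3 i)) = i"
  by (auto simp: succ3_def dest!: less_3_cases)

lemma UN_less_3: "(\<Union>i<3. F i) = F 0 \<union> F 1 \<union> F (2::nat)"
proof -
  have "{..<3::nat} = {0, 1, 2}"
    by auto
  then show ?thesis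
    by auto
qed

text \<open>Side i of a triangle runs from vertex i to vertex succ3 i, and \<kappa> i is the length of the
  spike at vertex i, along which the sides meeting there run together.\<close>
definition spiky_coincidences ::
    "(nat \<Rightarrow> real \<Rightarrow> 'a) \<Rightarrow> (nat \<Rightarrow> real) \<Rightarrow> (nat \<Rightarrow> real) \<Rightarrow> bool" where
  "spiky_coincidences \<gamma> L \<kappa> \<longleftrightarrow>
     (\<forall>i<3. 0 \<le> \<kappa> (succ3 i) \<and> \<kappa> (succ3 i) \<le> L i \<and> \<kappa> (succ3 i) \<le> L (succ3 i) \<and>
        inj_on (\<gamma> i) {0..L i} \<and>
        (\<forall>s\<in>{0..L i}. \<forall>t\<in>{0..L (succ3 i)}.
           \<gamma> i s = \<gamma> (succ3 i) t \<longleftrightarrow> s + t = L i \<and> t \<le> \<kappa> (succ3 i)))"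

lemma CAT0_spiky_coincidences:
  assumes "CAT0 X" and geo: "\<And>i. i < 3 \<Longrightarrow> geodesic_path X (\<gamma> i) (v i) (v (succ3 i))"
  defines "L \<equiv> \<lambda>i. dist (v i) (v (succ3 i))"
  obtains \<kappa> where "spiky_coincidences \<gamma> L \<kappa>"
proof -
  define P where "P i \<beta> \<longleftrightarrow> 0 \<le> \<beta> \<and> \<beta> \<le> L i \<and> \<beta> \<le> L (succ3 i) \<and>
     (\<forall>s\<in>{0..L i}. \<forall>t\<in>{0..L (succ3 i)}. \<gamma> i s = \<gamma> (succ3 i) t \<longleftrightarrow> s + t = L i \<and> t \<le> \<beta>)" for i \<beta>
  have "\<exists>\<beta>. P i \<beta>" if "i < 3" for i
  proof -
    have rev: "geodesic_path X (\<lambda>t. \<gamma> i (L i - t)) (v (succ3 i)) (v i)"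
      unfolding L_def using geodesic_path_reverse geo that by blast
    have "dist (v (succ3 i)) (v (succ3 (succ3 i))) = L (succ3 i)" "dist (v (succ3 i)) (v i) = L i"
      by (simp_all add: L_def dist_commute)
    from CAT0_geodesics_branch_point[OF assms(1) geo[OF succ3_simps(5)] rev, unfolded this]
    obtain \<beta> where \<beta>: "0 \<le> \<beta>" "\<beta> \<le> L (succ3 i)" "\<beta> \<le> L i"
      "\<And>t s. t \<in> {0..L (succ3 i)} \<Longrightarrow> s \<in> {0..L i} \<Longrightarrow>
         \<gamma> (succ3 i) t = \<gamma> i (L i - s) \<longleftrightarrow> t = s \<and> t \<le> \<beta>"
      by blast
    have "\<gamma> i s = \<gamma> (succ3 i) t \<longleftrightarrow> s + t = L i \<and> t \<le> \<beta>"
      if "s \<in> {0..L i}" "t \<in> {0..L (succ3 i)}" for s t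
      using \<beta>(4)[of t "L i - s"] that by auto
    with \<beta> show ?thesis
      unfolding P_def by blast
  qed
  then obtain b where b: "\<And>i. i < 3 \<Longrightarrow> P i (b i)"
    by metis
  \<comment> \<open>b i is the spike length at the final vertex succ3 i of side i\<close>
  have "spiky_coincidences \<gamma> L (\<lambda>j. b (succ3 (succ3 j)))"
    unfolding spiky_coincidences_def
    using b geodesic_path_inj_on[OF geo] by (simp add: P_def L_def)
  then show thesis ..
qed

lemma spiky_coincidences_nonneg:
  assumes "spiky_coincidences \<gamma> L \<kappa>" "i < 3"
  shows "0 \<le> \<kappa> i"
  using assms unfolding spiky_coincidences_def by (metis succ3_simps(5) succ3_succ3_succ3)

text \<open>A point u of side i that lies on the spikes at both of its ends is also on the third side.\<close>
lemma spiky_coincidences_overlap: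
  assumes "spiky_coincidences \<gamma> L \<kappa>" "i < 3"
    and "0 \<le> u" "L i - \<kappa> (succ3 i) \<le> u" "u \<le> \<kappa> i"
  defines "j \<equiv> succ3 i" and "k \<equiv> succ3 (succ3 i)"
  shows "(L i - u) + (L k - u) = L j \<and> L k - u \<le> \<kappa> k"
proof -
  have jk: "j < 3" "k < 3" "succ3 k = i" "succ3 j = k"
    using assms(2) by (simp_all add: j_def k_def)
  note C = assms(1)[unfolded spiky_coincidences_def, rule_format]
  have "\<kappa> i \<le> L k" "\<kappa> i \<le> L i" "\<kappa> j \<le> L j"
    using C[OF \<open>k < 3\<close>] C[OF assms(2)] jk by (simp_all add: j_def)
  then have "\<gamma> i u = \<gamma> j (L i - u)" "\<gamma> k (L k - u) = \<gamma> i u"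
    using C[of i] C[of k] assms(3-5) jk by (auto simp: j_def)
  then have "\<gamma> j (L i - u) = \<gamma> k (L k - u)"
    by simp
  then show ?thesis
    using C[of j] jk assms(3-5) \<open>\<kappa> i \<le> L k\<close> \<open>\<kappa> j \<le> L j\<close> \<open>\<kappa> i \<le> L i\<close> by auto
qed

text \<open>Otherwise the overlap equation would hold for two different values of u.\<close>
lemma spiky_coincidences_spikes_le:
  assumes "spiky_coincidences \<gamma> L \<kappa>" "i < 3"
  shows "\<kappa> i + \<kappa> (succ3 i) \<le> L i"
proof (rule ccontr)
  assume gt: "\<not> ?thesis"
  have "0 \<le> \<kappa> i" "\<kappa> (succ3 i) \<le> L i"
    using spiky_coincidences_nonneg[OF assms] assms unfolding spiky_coincidences_def by auto
  define u where "u = max 0 (L i - \<kappa> (succ3 i))"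
  have "u < \<kappa> i"
    using gt \<open>\<kappa> (succ3 i) \<le> L i\<close> by (auto simp: u_def)
  then have "(L i - u) + (L (succ3 (succ3 i)) - u) = L (succ3 i)"
    "(L i - \<kappa> i) + (L (succ3 (succ3 i)) - \<kappa> i) = L (succ3 i)"
    using spiky_coincidences_overlap[OF assms, of u] spiky_coincidences_overlap[OF assms, of "\<kappa> i"]
      \<open>0 \<le> \<kappa> i\<close> gt by (auto simp: u_def)
  with \<open>u < \<kappa> i\<close> show False
    by linarith
qed

lemma spiky_coincidences_no_gap_succ3:
  assumes "spiky_coincidences \<gamma> L \<kappa>" "i < 3" "\<kappa> i + \<kappa> (succ3 i) = L i"
  shows "\<kappa> (succ3 i) + \<kappa> (succ3 (succ3 i)) = L (succ3 i)"
proof -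
  have "\<kappa> (succ3 (succ3 i)) + \<kappa> i \<le> L (succ3 (succ3 i))"
    using spiky_coincidences_spikes_le[OF assms(1) succ3_simps(5), of "succ3 i"] assms(2) by simp
  then show ?thesis
    using spiky_coincidences_overlap[OF assms(1,2), of "\<kappa> i"] spiky_coincidences_nonneg[OF assms(1,2)]
      assms(3) by auto
qed

lemma spiky_coincidences_gap_cases:
  assumes "spiky_coincidences \<gamma> L \<kappa>"
  shows "(\<forall>i<3. \<kappa> i + \<kappa> (succ3 i) = L i) \<or> (\<forall>i<3. \<kappa> i + \<kappa> (succ3 i) < L i)"
proof (cases "\<exists>i<3. \<kappa> i + \<kappa> (succ3 i) = L i")
  case True
  then obtain i where i: "i < 3" "\<kappa> i + \<kappa> (succ3 i) = L i"
    by blast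
  then have "\<kappa> (succ3 i) + \<kappa> (succ3 (succ3 i)) = L (succ3 i)"
    by (rule spiky_coincidences_no_gap_succ3[OF assms])
  moreover from this have "\<kappa> (succ3 (succ3 i)) + \<kappa> i = L (succ3 (succ3 i))"
    using spiky_coincidences_no_gap_succ3[OF assms succ3_simps(5)] i(1) by fastforce
  moreover have "j = i \<or> j = succ3 i \<or> j = succ3 (succ3 i)" if "j < 3" for j
    using i(1) that by (auto simp: succ3_def dest!: less_3_cases)
  ultimately have "\<kappa> j + \<kappa> (succ3 j) = L j" if "j < 3" for j
    using i(1,2) that by (smt (verit) succ3_succ3_succ3)
  then show ?thesis
    by blast
next
  case False
  then show ?thesis
    using spiky_coincidences_spikes_le[OF assms] by (meson order_less_le)
qed

lemma spiky_coincidences_eq_iff: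
  assumes "spiky_coincidences \<sigma> L \<kappa>" "spiky_coincidences \<gamma> L \<kappa>"
    and "i < 3" "j < 3" "s \<in> {0..L i}" "t \<in> {0..L j}"
  shows "\<sigma> i s = \<sigma> j t \<longleftrightarrow> \<gamma> i s = \<gamma> j t"
proof -
  note S = assms(1)[unfolded spiky_coincidences_def, rule_format]
    and G = assms(2)[unfolded spiky_coincidences_def, rule_format]
  consider "i = j" | "j = succ3 i" | "i = succ3 j"
    using assms(3,4) by (auto simp: succ3_def dest!: less_3_cases)
  then show ?thesis
  proof cases
    case 1
    then show ?thesis
      using S[OF assms(3)] G[OF assms(3)] assms(5,6) inj_on_eq_iff[of "\<sigma> i" "{0..L i}" s t]
        inj_on_eq_iff[of "\<gamma> i" "{0..L i}" s t] by simp
  next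
    case 2
    then show ?thesis
      using S[OF assms(3)] G[OF assms(3)] assms(5,6) by simp
  next
    case 3
    then have "\<sigma> j t = \<sigma> i s \<longleftrightarrow> \<gamma> j t = \<gamma> i s"
      using S[OF assms(4)] G[OF assms(4)] assms(5,6) by simp
    then show ?thesis
      by (simp add: eq_commute)
  qed
qed

section \<open>Gluing paths with the same coincidences\<close>

lemma continuous_on_through_compact_image:
  fixes \<sigma> :: "'a::topological_space \<Rightarrow> 'b::metric_space"
  assumes "compact K" "continuous_on K \<sigma>" "continuous_on K (F \<circ> \<sigma>)"
  shows "continuous_on (\<sigma> ` K) F"
proof -
  have "quotient_map (top_of_set K) (top_of_set (\<sigma> ` K)) \<sigma>"
    using assms by (intro continuous_imp_quotient_map)
      (auto simp: compact_space_subtopology Hausdorff_space_subtopology)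
  then show ?thesis
    using continuous_compose_quotient_map assms(3) by (metis continuous_map_iff_continuous)
qed

lemma homeomorphic_UN_paths:
  fixes \<sigma> :: "'i \<Rightarrow> real \<Rightarrow> 'a::metric_space" and \<gamma> :: "'i \<Rightarrow> real \<Rightarrow> 'b::metric_space"
  assumes "finite J"
    and cont: "\<And>i. i \<in> J \<Longrightarrow> continuous_on {0..L i} (\<sigma> i) \<and> continuous_on {0..L i} (\<gamma> i)"
    and same: "\<And>i j s t. \<lbrakk>i \<in> J; j \<in> J; s \<in> {0..L i}; t \<in> {0..L j}\<rbrakk>
                 \<Longrightarrow> \<sigma> i s = \<sigma> j t \<longleftrightarrow> \<gamma> i s = \<gamma> j t"
  shows "(\<Union>i\<in>J. \<sigma> i ` {0..L i}) homeomorphic (\<Union>i\<in>J. \<gamma> i ` {0..L i})"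
proof -
  define F where "F w = (SOME v. \<exists>i\<in>J. \<exists>s\<in>{0..L i}. \<sigma> i s = w \<and> \<gamma> i s = v)" for w
  have F: "F (\<sigma> i s) = \<gamma> i s" if "i \<in> J" "s \<in> {0..L i}" for i s
    unfolding F_def by (rule someI2[where a = "\<gamma> i s"]) (use that same in blast)+
  let ?S = "\<Union>i\<in>J. \<sigma> i ` {0..L i}"
  have "continuous_on (\<sigma> i ` {0..L i}) F" if "i \<in> J" for i
  proof (rule continuous_on_through_compact_image)
    show "continuous_on {0..L i} (F \<circ> \<sigma> i)"
      using cont[OF that] F[OF that] by (auto intro: continuous_on_eq)
  qed (use cont that in auto)
  then have "continuous_on ?S F"
    using assms by (intro continuous_on_closed_Union compact_imp_closed compact_continuous_image) auto
  moreover have "compact ?S"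
    using assms by (intro compact_UN compact_continuous_image) auto
  moreover have "F ` ?S = (\<Union>i\<in>J. \<gamma> i ` {0..L i})"
    unfolding image_UN image_image using F by (intro SUP_cong image_cong) auto
  moreover have "inj_on F ?S"
  proof (rule inj_onI, clarify)
    fix i j s t assume "i \<in> J" "j \<in> J" "s \<in> {0..L i}" "t \<in> {0..L j}" "F (\<sigma> i s) = F (\<sigma> j t)"
    then show "\<sigma> i s = \<sigma> j t" using F same by metis
  qed
  ultimately obtain G where "homeomorphism ?S (\<Union>i\<in>J. \<gamma> i ` {0..L i}) F G"
    using homeomorphism_compact by metis
  then show ?thesis
    unfolding homeomorphic_def by blast
qed

lemma homeomorphic_spiky_coincidences:
  fixes \<sigma> :: "nat \<Rightarrow> real \<Rightarrow> 'a::metric_space" and \<gamma> :: "nat \<Rightarrow> real \<Rightarrow> 'b::metric_space"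
  assumes "spiky_coincidences \<sigma> L \<kappa>" "spiky_coincidences \<gamma> L \<kappa>"
    and "\<And>i. i < 3 \<Longrightarrow> continuous_on {0..L i} (\<sigma> i) \<and> continuous_on {0..L i} (\<gamma> i)"
  shows "(\<Union>i<3. \<sigma> i ` {0..L i}) homeomorphic (\<Union>i<3. \<gamma> i ` {0..L i})"
  using assms by (intro homeomorphic_UN_paths spiky_coincidences_eq_iff) auto

section \<open>The spiky triangle as a model\<close>

text \<open>A side of a spiky triangle, traversed inwards along the spike at A (direction u, length p),
  across the edge from A to B during a time interval of length c, and outwards along the spike at B.\<close>
definition side_path ::
    "'p::real_normed_vector \<Rightarrow> 'p \<Rightarrow> 'h::real_normed_vector \<Rightarrow> 'h \<Rightarrow> real \<Rightarrow> real \<Rightarrow> real \<Rightarrow> 'p \<times> 'h"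
  where
  "side_path A B u v p c \<theta> =
     (if \<theta> \<le> p then (A, (p - \<theta>) *\<^sub>R u)
      else if \<theta> \<le> p + c then (linepath A B ((\<theta> - p) / c), 0)
      else (B, (\<theta> - p - c) *\<^sub>R v))"

lemma continuous_on_side_path:
  fixes A B :: "'p::real_normed_vector" and u v :: "'h::real_normed_vector"
  assumes "0 \<le> c" "c = 0 \<Longrightarrow> A = B"
  shows "continuous_on S (side_path A B u v p c)"
proof -
  define edge_spike where "edge_spike \<theta> =
    (if \<theta> \<le> p + c then (linepath A B ((\<theta> - p) / c), 0) else (B, (\<theta> - p - c) *\<^sub>R v))" for \<theta>
  have "continuous_on UNIV edge_spike"
    unfolding edge_spike_def using assms(2)
    by (intro continuous_on_cases_le) (auto simp: linepath_def divide_inverse intro!: continuous_intros)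
  then have "continuous_on UNIV (\<lambda>\<theta>. if \<theta> \<le> p then (A, (p - \<theta>) *\<^sub>R u) else edge_spike \<theta>)"
    using assms(1)
    by (intro continuous_on_cases_le[where h = "\<lambda>\<theta>. \<theta>"] continuous_intros)
      (auto simp: edge_spike_def linepath_def intro: continuous_on_subset)
  then show ?thesis
    unfolding side_path_def edge_spike_def by (rule continuous_on_subset) simp
qed

lemma side_path_cases:
  assumes "0 \<le> c"
  obtains (start) "\<theta> \<le> p" "side_path A B u v p c \<theta> = (A, (p - \<theta>) *\<^sub>R u)"
    | (edge) x where "0 < c" "0 < x" "x \<le> 1" "\<theta> = p + x * c" "side_path A B u v p c \<theta> = (linepath A B x, 0)"
    | (finish) "p + c < \<theta>" "side_path A B u v p c \<theta> = (B, (\<theta> - p - c) *\<^sub>R v)"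
proof (cases "\<theta> \<le> p"; cases "\<theta> \<le> p + c")
  assume "\<not> \<theta> \<le> p" "\<theta> \<le> p + c"
  then show thesis
    by (intro edge[of "(\<theta> - p) / c"]) (auto simp: side_path_def field_simps)
qed (auto simp: side_path_def intro: start finish)

lemma side_path_image:
  assumes "0 \<le> p" "0 \<le> c" "0 \<le> q" "c = 0 \<Longrightarrow> A = B"
  shows "side_path A B u v p c ` {0..p + c + q} =
    (\<lambda>s. (A, s *\<^sub>R u)) ` {0..p} \<union> (\<lambda>P. (P, 0)) ` closed_segment A B \<union>
    (\<lambda>s. (B, s *\<^sub>R v)) ` {0..q}"
    (is "?lhs = ?spike_A \<union> ?edge \<union> ?spike_B")
proof
  show "?lhs \<subseteq> ?spike_A \<union> ?edge \<union> ?spike_B"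
  proof (rule image_subsetI)
    fix \<theta> assume "\<theta> \<in> {0..p + c + q}"
    moreover have "linepath A B ((\<theta> - p) / c) \<in> closed_segment A B" if "p < \<theta>" "\<theta> \<le> p + c"
      using that by (intro linepath_in_path) (auto simp: field_simps)
    ultimately show "side_path A B u v p c \<theta> \<in> ?spike_A \<union> ?edge \<union> ?spike_B"
      unfolding side_path_def by (auto simp: image_iff)
  qed
  have "(A, s *\<^sub>R u) = side_path A B u v p c (p - s)" if "s \<in> {0..p}" for s
    using that by (simp add: side_path_def)
  moreover have "(linepath A B \<mu>, 0) = side_path A B u v p c (p + \<mu> * c)" if "\<mu> \<in> {0..1}" for \<mu>
  proof (cases "c = 0 \<or> \<mu> = 0")
    case True
    then show ?thesis
      using assms(4) by (auto simp: side_path_def linepath_0')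
  next
    case False
    then have "0 < \<mu> * c" "\<mu> * c \<le> c"
      using that assms(2) by (simp_all add: mult_left_le_one_le)
    then show ?thesis
      by (simp add: side_path_def)
  qed
  moreover have "(B, s *\<^sub>R v) = side_path A B u v p c (p + c + s)" if "s \<in> {0..q}" for s
    using that assms(2,4) by (cases "c = 0") (auto simp: side_path_def linepath_1')
  moreover have "p - s \<in> {0..p + c + q}" if "s \<in> {0..p}" for s
    using that assms by auto
  moreover have "p + \<mu> * c \<in> {0..p + c + q}" if "\<mu> \<in> {0..1}" for \<mu>
    using that assms mult_left_le_one_le[of c \<mu>] by auto
  moreover have "p + c + s \<in> {0..p + c + q}" if "s \<in> {0..q}" for s
    using that assms by auto
  ultimately show "?spike_A \<union> ?edge \<union> ?spike_B \<subseteq> ?lhs"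
    unfolding linepath_image_01[symmetric] by (auto intro!: image_eqI)
qed

lemma scaleR_Basis_eq_scaleR_Basis_iff:
  assumes "u \<in> Basis" "v \<in> Basis" "u \<noteq> v"
  shows "a *\<^sub>R u = b *\<^sub>R v \<longleftrightarrow> a = 0 \<and> b = 0"
proof
  assume eq: "a *\<^sub>R u = b *\<^sub>R v"
  have "a = (a *\<^sub>R u) \<bullet> u" "b = (b *\<^sub>R v) \<bullet> v"
    using assms(1,2) by simp_all
  then show "a = 0 \<and> b = 0"
    using assms eq nonzero_Basis[OF assms(2)] by (simp add: inner_Basis)
qed simp

lemma linepath_eq_linepath_iff:
  assumes "A \<noteq> B"
  shows "linepath A B x = linepath A B y \<longleftrightarrow> x = y"
proof -
  have "linepath A B x - linepath A B y = (x - y) *\<^sub>R (B - A)"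
    by (simp add: linepath_def algebra_simps)
  then show ?thesis
    using assms by auto
qed

lemma linepath_eq_endpoint_iff:
  assumes "A \<noteq> B"
  shows "linepath A B x = A \<longleftrightarrow> x = 0" "A = linepath A B x \<longleftrightarrow> x = 0"
    "linepath A B x = B \<longleftrightarrow> x = 1" "B = linepath A B x \<longleftrightarrow> x = 1"
  using linepath_eq_linepath_iff[OF assms, of x 0] linepath_eq_linepath_iff[OF assms, of x 1]
  by (auto simp: linepath_0' linepath_1')

lemma inj_side_path:
  fixes A B :: "'p::real_normed_vector" and u v :: "'h::euclidean_space"
  assumes "u \<in> Basis" "v \<in> Basis" "u \<noteq> v" "0 < c \<Longrightarrow> A \<noteq> B"
  shows "inj (side_path A B u v p c)"
proof (rule injI)
  fix s t assume eq: "side_path A B u v p c s = side_path A B u v p c t"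
  have "u \<noteq> 0" "v \<noteq> 0"
    using assms(1,2) nonzero_Basis by blast+
  then show "s = t"
    using eq assms linepath_eq_linepath_iff[of A B] linepath_eq_endpoint_iff[of A B]
    by (auto simp: side_path_def scaleR_Basis_eq_scaleR_Basis_iff split: if_splits)
qed

lemma linepaths_meet_at_common_end:
  assumes "closed_segment A B \<inter> closed_segment B C \<subseteq> {B}" "A \<noteq> B" "B \<noteq> C"
    and "x \<in> {0..1}" "y \<in> {0..1}" "linepath A B x = linepath B C y"
  shows "x = 1" "y = 0"
proof -
  have "linepath A B x = B"
    using assms linepath_in_path[of x A B] linepath_in_path[of y B C] by auto
  then show "x = 1" "y = 0"
    using assms(2,3,6) linepath_eq_endpoint_iff by metis+
qed

lemma side_path_eq_end_spike_iff:
  fixes u v :: "'h::euclidean_space"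
  assumes "u \<in> Basis" "v \<in> Basis" "u \<noteq> v" "0 \<le> c" "c = 0 \<longleftrightarrow> A = B" "0 \<le> \<alpha>"
  shows "side_path A B u v p c s = (B, \<alpha> *\<^sub>R v) \<longleftrightarrow> s = p + c + \<alpha>"
proof
  assume eq: "side_path A B u v p c s = (B, \<alpha> *\<^sub>R v)"
  have "v \<noteq> 0"
    using assms(2) nonzero_Basis by blast
  show "s = p + c + \<alpha>"
  proof (cases s rule: side_path_cases[where A = A and B = B and u = u and v = v and p = p, OF assms(4),
        case_names start edge finish])
    case start
    then show ?thesis
      using eq assms(5,6) scaleR_Basis_eq_scaleR_Basis_iff[OF assms(1-3), of "p - s" \<alpha>] by auto
  next
    case (edge x)
    then show ?thesis
      using eq assms(5,6) linepath_eq_endpoint_iff(3)[of A B x] \<open>v \<noteq> 0\<close> by auto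
  next
    case finish
    then show ?thesis
      using eq \<open>v \<noteq> 0\<close> by auto
  qed
next
  assume "s = p + c + \<alpha>"
  then show "side_path A B u v p c s = (B, \<alpha> *\<^sub>R v)"
    using assms(4-6) by (auto simp: side_path_def linepath_1')
qed

lemma side_path_ne_next_side_path:
  fixes A B C :: "'p::real_normed_vector" and u v w :: "'h::euclidean_space"
  assumes "u \<in> Basis" "v \<in> Basis" "w \<in> Basis" "u \<noteq> v" "v \<noteq> w" "w \<noteq> u"
    and "0 \<le> c" "0 \<le> c'" "c = 0 \<longleftrightarrow> A = B" "0 < c' \<Longrightarrow> B \<noteq> C"
    and "closed_segment A B \<inter> closed_segment B C \<subseteq> {B}" "q < t"
  shows "side_path A B u v p c s \<noteq> side_path B C v w q c' t"
proof (cases t rule: side_path_cases[where A = B and B = C and u = v and v = w and p = q, OF assms(8),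
      case_names start edge finish])
  case start
  then show ?thesis
    using assms(12) by simp
next
  case (edge y)
  then have "B \<noteq> C"
    using assms(10) by blast
  have "linepath A B x \<noteq> linepath B C y" if "0 \<le> x" "x \<le> 1" "A \<noteq> B" for x
    using linepaths_meet_at_common_end(2)[OF assms(11) \<open>A \<noteq> B\<close> \<open>B \<noteq> C\<close>, of x y] edge that by auto
  moreover from this[of 0] have "A \<noteq> linepath B C y"
    using linepath_eq_endpoint_iff(2)[OF \<open>B \<noteq> C\<close>, of y] edge by (cases "A = B") (auto simp: linepath_0')
  ultimately show ?thesis
    using edge assms(2,7,9) nonzero_Basis
    by (cases s rule: side_path_cases[where A = A and B = B and u = u and v = v and p = p, OF assms(7)])
      (auto simp: linepath_0')
next
  case finish
  then show ?thesis
    using scaleR_Basis_eq_scaleR_Basis_iff[OF assms(1,3) not_sym[OF assms(6)]]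
      scaleR_Basis_eq_scaleR_Basis_iff[OF assms(2,3,5)] assms(3) nonzero_Basis
    by (cases s rule: side_path_cases[where A = A and B = B and u = u and v = v and p = p, OF assms(7)]) auto
qed

lemma side_path_eq_next_side_path_iff:
  fixes A B C :: "'p::real_normed_vector" and u v w :: "'h::euclidean_space"
  assumes "u \<in> Basis" "v \<in> Basis" "w \<in> Basis" "u \<noteq> v" "v \<noteq> w" "w \<noteq> u"
    and "0 \<le> c" "0 \<le> c'" "c = 0 \<longleftrightarrow> A = B" "0 < c' \<Longrightarrow> B \<noteq> C"
    and "closed_segment A B \<inter> closed_segment B C \<subseteq> {B}"
  shows "side_path A B u v p c s = side_path B C v w q c' t \<longleftrightarrow> s + t = p + c + q \<and> t \<le> q"
proof (cases "t \<le> q")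
  case True
  then have "side_path B C v w q c' t = (B, (q - t) *\<^sub>R v)"
    by (simp add: side_path_def)
  with True show ?thesis
    using side_path_eq_end_spike_iff[OF assms(1,2,4,7,9), of "q - t" p s] by auto
next
  case False
  then show ?thesis
    using side_path_ne_next_side_path[OF assms, of q t p s] by simp
qed

lemma spiky_triangle_eq:
  "spiky_triangle a b c la lb lc =
     (\<lambda>P. (P, 0)) ` (closed_segment a b \<union> closed_segment b c \<union> closed_segment c a) \<union>
     (\<lambda>s. (a, s *\<^sub>R (1, 0, 0))) ` {0..la} \<union> (\<lambda>s. (b, s *\<^sub>R (0, 1, 0))) ` {0..lb} \<union>
     (\<lambda>s. (c, s *\<^sub>R (0, 0, 1))) ` {0..lc}"
  unfolding spiky_triangle_def by (auto simp: zero_prod_def)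

lemma spiky_coincidences_side_paths:
  fixes V :: "nat \<Rightarrow> 'p::real_normed_vector" and e :: "nat \<Rightarrow> 'h::euclidean_space"
    and L \<kappa> :: "nat \<Rightarrow> real"
  defines "gap \<equiv> \<lambda>i. L i - \<kappa> i - \<kappa> (succ3 i)"
  assumes nonneg: "\<And>i. i < 3 \<Longrightarrow> 0 \<le> \<kappa> i \<and> 0 \<le> gap i"
    and e: "\<And>i. i < 3 \<Longrightarrow> e i \<in> Basis \<and> e i \<noteq> e (succ3 i)"
    and V: "\<And>i. i < 3 \<Longrightarrow> gap i = 0 \<longleftrightarrow> V i = V (succ3 i)"
      "\<And>i. i < 3 \<Longrightarrow>
         closed_segment (V i) (V (succ3 i)) \<inter> closed_segment (V (succ3 i)) (V (succ3 (succ3 i)))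
           \<subseteq> {V (succ3 i)}"
  shows "spiky_coincidences (\<lambda>i. side_path (V i) (V (succ3 i)) (e i) (e (succ3 i)) (\<kappa> i) (gap i)) L \<kappa>"
  unfolding spiky_coincidences_def
proof (intro allI impI conjI)
  fix i :: nat assume i: "i < 3"
  let ?j = "succ3 i" and ?k = "succ3 (succ3 i)"
  have jk: "?j < 3" "?k < 3" "succ3 ?k = i"
    using i by simp_all
  have L: "L i = \<kappa> i + gap i + \<kappa> ?j"
    by (simp add: gap_def)
  show "0 \<le> \<kappa> ?j" "\<kappa> ?j \<le> L i" "\<kappa> ?j \<le> L ?j"
    using nonneg[OF i] nonneg[OF jk(1)] nonneg[OF jk(2)] by (simp_all add: gap_def)
  have "inj (side_path (V i) (V ?j) (e i) (e ?j) (\<kappa> i) (gap i))"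
    using e[OF i] e[OF jk(1)] V(1)[OF i] by (intro inj_side_path) auto
  then show "inj_on (side_path (V i) (V ?j) (e i) (e ?j) (\<kappa> i) (gap i)) {0..L i}"
    using inj_on_subset by blast
  have "e ?k \<noteq> e i" "0 < gap ?j \<Longrightarrow> V ?j \<noteq> V ?k"
    using e[OF jk(2)] jk(3) V(1)[OF jk(1)] by auto
  with e[OF i] e[OF jk(1)] e[OF jk(2)] nonneg[OF i] nonneg[OF jk(1)]
  have "side_path (V i) (V ?j) (e i) (e ?j) (\<kappa> i) (gap i) s = side_path (V ?j) (V ?k) (e ?j) (e ?k) (\<kappa> ?j) (gap ?j) t
      \<longleftrightarrow> s + t = L i \<and> t \<le> \<kappa> ?j" for s t
    unfolding L by (intro side_path_eq_next_side_path_iff V(1)[OF i] V(2)[OF i]) auto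
  then show "\<forall>s\<in>{0..L i}. \<forall>t\<in>{0..L ?j}.
      side_path (V i) (V ?j) (e i) (e ?j) (\<kappa> i) (gap i) s = side_path (V ?j) (V ?k) (e ?j) (e ?k) (\<kappa> ?j) (gap ?j) t
      \<longleftrightarrow> s + t = L i \<and> t \<le> \<kappa> ?j"
    by blast
qed

lemma spiky_triangle_vertices:
  fixes gap :: "nat \<Rightarrow> real"
  assumes "(\<forall>i<3. gap i = 0) \<or> (\<forall>i<3. gap i \<noteq> 0)"
  shows "\<exists>V :: nat \<Rightarrow> real \<times> real. \<forall>i<3. (gap i = 0 \<longleftrightarrow> V i = V (succ3 i)) \<and>
    closed_segment (V i) (V (succ3 i)) \<inter> closed_segment (V (succ3 i)) (V (succ3 (succ3 i))) \<subseteq> {V (succ3 i)}"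
  using assms
proof
  assume "\<forall>i<3. gap i = 0"
  then show ?thesis
    by (intro exI[of _ "\<lambda>_. (0, 0)"]) auto
next
  assume "\<forall>i<3. gap i \<noteq> 0"
  then show ?thesis
    by (intro exI[of _ "\<lambda>i. [(0, 0), (1, 0), (0, 1)] ! i"])
      (auto simp: succ3_def in_segment prod_eq_iff dest!: less_3_cases)
qed

lemma spiky_coincidences_realised_in_spiky_triangle:
  assumes "spiky_coincidences \<gamma> L \<kappa>"
  obtains \<sigma> a b c where "spiky_coincidences \<sigma> L \<kappa>"
    "\<And>i. i < 3 \<Longrightarrow> continuous_on {0..L i} (\<sigma> i)"
    "(\<Union>i<3. \<sigma> i ` {0..L i}) = spiky_triangle a b c (\<kappa> 0) (\<kappa> 1) (\<kappa> 2)"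
proof -
  define gap where "gap i = L i - \<kappa> i - \<kappa> (succ3 i)" for i
  have "(\<forall>i<3. gap i = 0) \<or> (\<forall>i<3. gap i \<noteq> 0)"
    using spiky_coincidences_gap_cases[OF assms] by (auto simp: gap_def)
  then obtain V :: "nat \<Rightarrow> real \<times> real" where "\<forall>i<3. (gap i = 0 \<longleftrightarrow> V i = V (succ3 i)) \<and>
    closed_segment (V i) (V (succ3 i)) \<inter> closed_segment (V (succ3 i)) (V (succ3 (succ3 i))) \<subseteq> {V (succ3 i)}"
    using spiky_triangle_vertices by blast
  then have V: "\<And>i. i < 3 \<Longrightarrow> gap i = 0 \<longleftrightarrow> V i = V (succ3 i)"
    "\<And>i. i < 3 \<Longrightarrow>
       closed_segment (V i) (V (succ3 i)) \<inter> closed_segment (V (succ3 i)) (V (succ3 (succ3 i))) \<subseteq> {V (succ3 i)}"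
    by blast+
  define e :: "nat \<Rightarrow> real \<times> real \<times> real" where "e i = [(1, 0, 0), (0, 1, 0), (0, 0, 1)] ! i" for i
  define \<sigma> where "\<sigma> i = side_path (V i) (V (succ3 i)) (e i) (e (succ3 i)) (\<kappa> i) (gap i)" for i
  have nonneg: "0 \<le> \<kappa> i \<and> 0 \<le> gap i" if "i < 3" for i
    using spiky_coincidences_nonneg[OF assms that] spiky_coincidences_spikes_le[OF assms that]
    by (simp add: gap_def)
  have e: "e i \<in> Basis \<and> e i \<noteq> e (succ3 i)" if "i < 3" for i
    using that by (auto simp: e_def succ3_def Basis_prod_def zero_prod_def dest!: less_3_cases)
  have "spiky_coincidences \<sigma> L \<kappa>"
    unfolding \<sigma>_def gap_def using spiky_coincidences_side_paths nonneg e V unfolding gap_def by blast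
  moreover have "continuous_on {0..L i} (\<sigma> i)" if "i < 3" for i
    unfolding \<sigma>_def using continuous_on_side_path nonneg V(1) that by blast
  moreover have "\<sigma> i ` {0..L i} = (\<lambda>s. (V i, s *\<^sub>R e i)) ` {0..\<kappa> i} \<union>
      (\<lambda>P. (P, 0)) ` closed_segment (V i) (V (succ3 i)) \<union>
      (\<lambda>s. (V (succ3 i), s *\<^sub>R e (succ3 i))) ` {0..\<kappa> (succ3 i)}"
    if "i < 3" for i
  proof -
    have "L i = \<kappa> i + gap i + \<kappa> (succ3 i)"
      by (simp add: gap_def)
    then show ?thesis
      unfolding \<sigma>_def \<open>L i = _\<close> using nonneg[OF that] nonneg[OF succ3_simps(5)] V(1)[OF that]
      by (intro side_path_image) auto
  qed
  then have "(\<Union>i<3. \<sigma> i ` {0..L i}) = spiky_triangle (V 0) (V 1) (V 2) (\<kappa> 0) (\<kappa> 1) (\<kappa> 2)"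
    unfolding UN_less_3 spiky_triangle_eq by (simp add: e_def succ3_def numeral_2_eq_2 image_Un) blast
  ultimately show thesis
    using that by blast
qed

theorem lemma4p4:
  fixes X :: "'a::metric_space set" and I :: "'i set"
    and P :: "'i \<Rightarrow> (real \<times> real) set" and \<phi> :: "'i \<Rightarrow> real \<times> real \<Rightarrow> 'a"
    and x y z :: 'a and \<gamma>1 \<gamma>2 \<gamma>3 :: "real \<Rightarrow> 'a"
  assumes "euclidean_polygonal_complex X I P \<phi>" and "CAT0 X"
    and "x \<in> X" and "y \<in> X" and "z \<in> X"
    and "geodesic_path X \<gamma>1 x y" and "geodesic_path X \<gamma>2 y z" and "geodesic_path X \<gamma>3 z x"
  shows "\<exists>a b c la lb lc. 0 \<le> la \<and> 0 \<le> lb \<and> 0 \<le> lc \<and>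
           (\<gamma>1 ` {0..dist x y} \<union> \<gamma>2 ` {0..dist y z} \<union> \<gamma>3 ` {0..dist z x})
             homeomorphic spiky_triangle a b c la lb lc"
proof -
  define \<gamma> where "\<gamma> i = [\<gamma>1, \<gamma>2, \<gamma>3] ! i" for i
  define v where "v i = [x, y, z] ! i" for i
  define L where "L i = dist (v i) (v (succ3 i))" for i
  have geo: "geodesic_path X (\<gamma> i) (v i) (v (succ3 i))" if "i < 3" for i
    using that assms(6-8) by (auto simp: \<gamma>_def v_def dest!: less_3_cases)
  then obtain \<kappa> where \<kappa>: "spiky_coincidences \<gamma> L \<kappa>"
    using CAT0_spiky_coincidences[OF assms(2)] unfolding L_def by blast
  obtain \<sigma> a b c where \<sigma>: "spiky_coincidences \<sigma> L \<kappa>"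
    "\<And>i. i < 3 \<Longrightarrow> continuous_on {0..L i} (\<sigma> i)"
    "(\<Union>i<3. \<sigma> i ` {0..L i}) = spiky_triangle a b c (\<kappa> 0) (\<kappa> 1) (\<kappa> 2)"
    by (rule spiky_coincidences_realised_in_spiky_triangle[OF \<kappa>]) auto
  have "(\<Union>i<3. \<gamma> i ` {0..L i}) homeomorphic (\<Union>i<3. \<sigma> i ` {0..L i})"
    using \<sigma>(2) geodesic_path_continuous_on[OF geo]
    by (intro homeomorphic_spiky_coincidences[OF \<kappa> \<sigma>(1)]) (simp add: L_def)
  moreover have "(\<Union>i<3. \<gamma> i ` {0..L i}) =
      \<gamma>1 ` {0..dist x y} \<union> \<gamma>2 ` {0..dist y z} \<union> \<gamma>3 ` {0..dist z x}"
    by (simp add: UN_less_3 \<gamma>_def v_def L_def)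
  ultimately have "(\<gamma>1 ` {0..dist x y} \<union> \<gamma>2 ` {0..dist y z} \<union> \<gamma>3 ` {0..dist z x})
      homeomorphic spiky_triangle a b c (\<kappa> 0) (\<kappa> 1) (\<kappa> 2)"
    by (simp only: \<sigma>(3))
  moreover have "0 \<le> \<kappa> 0" "0 \<le> \<kappa> 1" "0 \<le> \<kappa> 2"
    using spiky_coincidences_nonneg[OF \<kappa>] by simp_all
  ultimately show ?thesis
    by blast
qed

end
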